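(* For every complex number $s$ with $\operatorname{Re}(s)>3$, $$\sum_{n\ge1}\frac{\varphi(n)\delta(n)}{n^s}=\frac{\zeta(s-2)}{\zeta(s-1)}\Big(F(s-2)-F(s-1)\Big).$$
   Context: The arithmetic derivative $\delta$ is defined by $\delta(p)=1$ for every prime $p$ and $\delta(mn)=m\delta(n)+n\delta(m)$ for all positive integers $m,n$; equivalently $\delta(1)=0$ and $\delta(n)=n\sum_{p^\alpha\| n}\alpha/p$. $\varphi$ is Euler's totient function, $\zeta$ is the Riemann zeta function and $F(s)=\sum_{p\text{ prime}}\frac{1}{p^{s+1}-p}$. *)

theory Defs
  imports "HOL-Analysis.Analysis" "HOL-Number_Theory.Number_Theory"
begin

text \<open>Arithmetic derivative: delta(1) = 0 and
  delta(n) = n * (sum over p^a || n of a/p), written over the naturals.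
  We also set delta(0) = 0 (irrelevant: the series starts at n = 1).\<close>
definition arith_deriv :: "nat \<Rightarrow> nat" where
  "arith_deriv n = (\<Sum>p\<in>prime_factors n. multiplicity p n * (n div p))"

text \<open>Riemann zeta function in its Dirichlet-series form; it is only used
  for Re(s) > 1, where this series converges.\<close>
definition zeta_series :: "complex \<Rightarrow> complex" where
  "zeta_series s = (\<Sum>n. 1 / (of_nat (Suc n)) powr s)"

definition F_prime :: "complex \<Rightarrow> complex" where
  "F_prime s = infsum (\<lambda>p::nat. 1 / ((of_nat p) powr (s + 1) - of_nat p)) {p. prime p}"

end

theory Submission
  imports Defs
begin

text \<open>
  Let \<open>c\<close> be supported on prime powers with \<open>c(p\<^sup>k) = p\<^sup>k\<^sup>-\<^sup>1 (p\<^sup>k - 1)\<close>. Then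
  \<open>\<phi>(n) \<delta>(n) = \<Sum>\<^sub>d\<^sub>|\<^sub>n c(d) (n/d) \<phi>(n/d)\<close>: writing \<open>n = p\<^sup>v m\<close> and \<open>p\<close> not dividing \<open>m\<close>, the terms with
  \<open>d = p\<^sup>k\<close> add up to \<open>v (n/p) \<phi>(n)\<close>, and summing over \<open>p\<close> gives \<open>\<phi>(n) \<delta>(n)\<close>.
  Hence the Dirichlet series of \<open>\<phi> \<delta>\<close> is the product of those of \<open>c\<close> and of \<open>n \<phi>(n)\<close>.
  The latter is \<open>\<zeta>(s-2)/\<zeta>(s-1)\<close> because \<open>\<Sum>\<^sub>d\<^sub>|\<^sub>n d \<phi>(d) (n/d) = n\<^sup>2\<close>, and the former is
  \<open>F(s-2) - F(s-1)\<close> since for each prime both parts of \<open>c(p\<^sup>k) p\<^sup>-\<^sup>k\<^sup>s\<close> are geometric series in \<open>k\<close>.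
\<close>

section \<open>The convolution identity for \<open>\<phi> \<delta>\<close>\<close>

definition prime_power_coeff :: "nat \<Rightarrow> nat" where
  "prime_power_coeff n = (if primepow n then n div aprimedivisor n * (n - 1) else 0)"

lemma prime_power_coeff_prime_power:
  assumes "prime p" "k > 0"
  shows "prime_power_coeff (p ^ k) = p ^ (k - 1) * (p ^ k - 1)"
proof -
  have "p ^ k div p = p ^ (k - 1)"
    using assms by (simp add: power_diff prime_gt_0_nat)
  then show ?thesis
    using assms by (simp add: prime_power_coeff_def aprimedivisor_prime_power)
qed

lemma prime_power_coeff_le: "prime_power_coeff n \<le> n * n"
  unfolding prime_power_coeff_def by (simp add: mult_le_mono)

lemma of_nat_prime_power_coeff_prime_power:
  assumes "prime p"
  shows "int (prime_power_coeff (p ^ k)) = int p ^ (k - 1) * (int p ^ k - 1)"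
proof (cases "k = 0")
  case False
  have "p ^ k \<ge> 1"
    using prime_gt_0_nat[OF assms] by simp
  then show ?thesis
    using False by (simp add: prime_power_coeff_prime_power[OF assms] of_nat_diff)
qed (simp add: prime_power_coeff_def)

lemma of_nat_prime_power_mult_totient:
  assumes "prime p"
  shows "int (p ^ Suc j * totient (p ^ Suc j)) = int p ^ Suc (2 * j) * (int p - 1)"
proof -
  have "int (p ^ Suc j * totient (p ^ Suc j)) = int (p ^ Suc j) * int (p ^ j * (p - 1))"
    by (simp only: totient_prime_power_Suc[OF assms] of_nat_mult)
  moreover have "int p ^ (2 * j) = int p ^ j * int p ^ j"
    by (simp add: mult_2 power_add)
  ultimately show ?thesis
    using prime_gt_0_nat[OF assms] by (simp add: of_nat_diff algebra_simps)
qed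

text \<open>The factor \<open>p\<^sup>2\<close> avoids the truncated exponent \<open>2v - 2\<close> of the closed form.\<close>

lemma prime_power_coeff_convolution_prime_power:
  assumes p: "prime p"
  shows "int p ^ 2 * (\<Sum>k=1..v. int (prime_power_coeff (p ^ k)) * int (p ^ (v - k) * totient (p ^ (v - k))))
           = int v * int p ^ (2 * v) * (int p - 1)"
proof -
  define c where "c k = int (prime_power_coeff (p ^ k))" for k
  define a where "a j = int (p ^ j * totient (p ^ j))" for j
  define T where "T v = (\<Sum>k=1..v. c k * a (v - k))" for v
  have a_0: "a 0 = 1" and a_Suc': "a (Suc j) = int p ^ Suc (2 * j) * (int p - 1)" for j
    by (simp_all only: a_def of_nat_prime_power_mult_totient[OF p]) simp
  have a_Suc: "a (Suc j) = int p ^ 2 * a j - (if j = 0 then int p else 0)" for j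
    by (cases j) (simp_all add: a_0 a_Suc' algebra_simps power2_eq_square)
  have c: "c k = int p ^ (k - 1) * (int p ^ k - 1)" for k
    by (simp only: c_def of_nat_prime_power_coeff_prime_power[OF p])
  have c_step: "c (Suc v) - int p * c v = int p ^ (2 * v) * (int p - 1)" for v
  proof -
    have "c (Suc v) - int p * c v = int p ^ v * int p ^ v * (int p - 1)"
      by (cases v) (simp_all add: c algebra_simps)
    then show ?thesis by (simp add: mult_2 power_add)
  qed
  have T_Suc: "T (Suc v) = int p ^ 2 * T v + int p ^ (2 * v) * (int p - 1)" for v
  proof -
    have "T (Suc v) = (\<Sum>k=1..v. c k * a (Suc (v - k))) + c (Suc v)"
      by (simp add: T_def a_def Suc_diff_le)
    also have "(\<Sum>k=1..v. c k * a (Suc (v - k)))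
        = (\<Sum>k=1..v. int p ^ 2 * (c k * a (v - k)) - (if k = v then int p * c k else 0))"
      by (rule sum.cong) (auto simp: a_Suc algebra_simps)
    also have "\<dots> = int p ^ 2 * T v - int p * c v"
      by (cases "v = 0") (simp_all add: T_def sum_subtractf sum_distrib_left c_def prime_power_coeff_def)
    finally show ?thesis
      using c_step by simp
  qed
  show ?thesis
    unfolding c_def[symmetric] a_def[symmetric] T_def[symmetric]
  proof (induction v)
    case (Suc v)
    have "int p ^ 2 * T (Suc v) = int p ^ 2 * (int p ^ 2 * T v) + int p ^ 2 * int p ^ (2 * v) * (int p - 1)"
      by (simp add: T_Suc algebra_simps)
    also have "\<dots> = int p ^ 2 * (int v * int p ^ (2 * v) * (int p - 1)) + int p ^ 2 * int p ^ (2 * v) * (int p - 1)"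
      by (simp only: Suc.IH)
    also have "\<dots> = int (Suc v) * (int p ^ 2 * int p ^ (2 * v)) * (int p - 1)"
      by (simp add: algebra_simps)
    finally show ?case
      by (simp add: power2_eq_square)
  qed (simp add: T_def)
qed

lemma sum_prime_power_coeff_prime_power:
  assumes p: "prime p"
  shows "(\<Sum>k=1..v. prime_power_coeff (p ^ k) * (p ^ (v - k) * totient (p ^ (v - k))))
           = v * p ^ (v - 1) * totient (p ^ v)"
proof (cases v)
  case (Suc u)
  have p1: "p \<ge> 1" using prime_gt_0_nat[OF p] by simp
  have "int p ^ 2 * (\<Sum>k=1..v. int (prime_power_coeff (p ^ k)) * int (p ^ (v - k) * totient (p ^ (v - k))))
      = int p ^ 2 * (int v * int p ^ (2 * u) * (int p - 1))"
    unfolding prime_power_coeff_convolution_prime_power[OF p] Suc by (simp add: power2_eq_square)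
  then have "(\<Sum>k=1..v. int (prime_power_coeff (p ^ k)) * int (p ^ (v - k) * totient (p ^ (v - k))))
      = int v * int p ^ (2 * u) * (int p - 1)"
    using p1 by simp
  also have "\<dots> = int v * int (p ^ u) * int (p ^ u * (p - 1))"
    using p1 by (simp add: of_nat_diff mult_2 power_add)
  also have "\<dots> = int (v * p ^ (v - 1) * totient (p ^ v))"
    unfolding Suc by (simp only: totient_prime_power_Suc[OF p] of_nat_mult diff_Suc_1)
  finally show ?thesis
    by (simp flip: of_nat_mult of_nat_sum)
qed simp

lemma sum_prime_power_coeff_prime_factor:
  assumes n: "n > 0" and p: "prime p"
  shows "(\<Sum>k\<in>{0<..multiplicity p n}. prime_power_coeff (p ^ k) * (n div p ^ k * totient (n div p ^ k)))
           = multiplicity p n * (n div p) * totient n"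
proof -
  define v where "v = multiplicity p n"
  define m where "m = n div p ^ v"
  have nm: "n = p ^ v * m"
    unfolding m_def v_def using multiplicity_dvd[of p n] by simp
  have "\<not> p dvd m"
    unfolding m_def v_def using multiplicity_decompose[of n p] n prime_gt_1_nat[OF p] by simp
  then have cop: "coprime (p ^ j) m" for j
    using prime_imp_coprime[OF p] by simp
  have div_power: "n div p ^ k = p ^ (v - k) * m" if "k \<le> v" for k
  proof -
    have "n = p ^ k * (p ^ (v - k) * m)"
      unfolding nm using that by (simp add: mult.assoc flip: power_add)
    then show ?thesis
      using prime_gt_0_nat[OF p] by simp
  qed
  have "{0<..v} = {1..v}"
    by auto
  then have "(\<Sum>k\<in>{0<..v}. prime_power_coeff (p ^ k) * (n div p ^ k * totient (n div p ^ k)))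
      = (\<Sum>k=1..v. prime_power_coeff (p ^ k) * (p ^ (v - k) * totient (p ^ (v - k)))) * (m * totient m)"
    unfolding sum_distrib_right
  proof (intro sum.cong)
    fix k assume "k \<in> {1..v}"
    then have "n div p ^ k * totient (n div p ^ k) = p ^ (v - k) * totient (p ^ (v - k)) * (m * totient m)"
      by (simp only: div_power totient_mult_coprime[OF cop] atLeastAtMost_iff) (simp add: algebra_simps)
    then show "prime_power_coeff (p ^ k) * (n div p ^ k * totient (n div p ^ k))
        = prime_power_coeff (p ^ k) * (p ^ (v - k) * totient (p ^ (v - k))) * (m * totient m)"
      by simp
  qed
  also have "\<dots> = v * (n div p) * totient n"
  proof (cases v)
    case (Suc u)
    have "n div p = p ^ u * m"
      using div_power[of 1] Suc by simp
    moreover have "totient n = totient (p ^ v) * totient m"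
      unfolding nm by (rule totient_mult_coprime[OF cop])
    ultimately show ?thesis
      unfolding sum_prime_power_coeff_prime_power[OF p] using Suc by (simp add: algebra_simps)
  qed simp
  finally show ?thesis
    unfolding v_def .
qed

lemma convolution_prime_power_coeff_id_totient:
  assumes n: "n > 0"
  shows "(\<Sum>d | d dvd n. prime_power_coeff d * (n div d * totient (n div d))) = totient n * arith_deriv n"
proof -
  define f where "f d = prime_power_coeff d * (n div d * totient (n div d))" for d
  define A where "A = (SIGMA p:prime_factors n. {0<..multiplicity p n})"
  have "(\<Sum>d | d dvd n. f d) = (\<Sum>d \<in> primepow_factors n. f d)"
    using n by (intro sum.mono_neutral_cong_right) (auto simp: primepow_factors_def f_def prime_power_coeff_def)
  also have "primepow_factors n = (\<lambda>(p, k). p ^ k) ` A"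
    unfolding A_def using n by (subst primepow_factors_altdef) fast+
  also have "sum f \<dots> = (\<Sum>(p, k)\<in>A. f (p ^ k))"
    unfolding A_def
    by (subst sum.reindex) (auto simp: inj_on_def prime_power_inj'' prime_factors_multiplicity case_prod_unfold)
  also have "\<dots> = (\<Sum>p\<in>prime_factors n. multiplicity p n * (n div p) * totient n)"
    unfolding A_def f_def
    by (subst sum.Sigma[symmetric])
       (auto intro!: sum.cong sum_prime_power_coeff_prime_factor[OF n])
  also have "\<dots> = totient n * arith_deriv n"
    unfolding arith_deriv_def sum_distrib_left by (simp add: algebra_simps)
  finally show ?thesis
    unfolding f_def .
qed

section \<open>Absolutely convergent Dirichlet series\<close>

lemma norm_of_nat_powr: "norm ((of_nat n :: complex) powr z) = real n powr Re z"
  using norm_powr_real_powr[of "of_nat n" z] by simp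

lemma of_nat_mult_powr: "(of_nat (a * b) :: complex) powr z = of_nat a powr z * of_nat b powr z"
  by (simp add: powr_times_real)

lemma of_nat_power_powr: "(of_nat (p ^ k) :: complex) powr z = (of_nat p powr z) ^ k"
  by (induction k) (simp_all add: of_nat_mult_powr[of p "p ^ _", simplified])

lemma of_nat_power_div_powr:
  "n > 0 \<Longrightarrow> (of_nat n :: complex) ^ k / of_nat n powr s = 1 / of_nat n powr (s - of_nat k)"
  by (simp add: powr_diff powr_nat')

lemma summable_on_real_powr_neg: "t > 1 \<Longrightarrow> (\<lambda>n::nat. real n powr - t) summable_on {1..}"
  by (rule summable_on_subset_banach[of _ UNIV], rule norm_summable_imp_summable_on)
     (auto simp: summable_real_powr_iff)

lemma has_sum_Suc_iff: "((\<lambda>n. f (Suc n)) has_sum S) UNIV \<longleftrightarrow> (f has_sum S) {1..}"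
  by (rule has_sum_reindex_bij_witness[of _ "\<lambda>n. n - 1"]) auto

lemma has_sum_mult_Times:
  fixes f :: "'a \<Rightarrow> 'c :: {banach, real_normed_div_algebra}" and g :: "'b \<Rightarrow> 'c"
  assumes "(f has_sum a) A" "(g has_sum b) B"
    and "(\<lambda>x. norm (f x)) summable_on A" "(\<lambda>y. norm (g y)) summable_on B"
  shows "((\<lambda>(x, y). f x * g y) has_sum a * b) (A \<times> B)"
proof (rule has_sum_SigmaI)
  have "(\<lambda>x. norm (f x) * (\<Sum>\<^sub>\<infinity>y\<in>B. norm (g y))) summable_on A"
    using assms(3) by (rule summable_on_cmult_left)
  then have "(\<lambda>z. norm ((\<lambda>(x, y). f x * g y) z)) summable_on A \<times> B"
    using assms(4)
    by (subst Infinite_Sum.abs_summable_on_Sigma_iff)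
       (auto simp: norm_mult infsum_cmult_right' summable_on_cmult_right infsum_nonneg)
  then show "(\<lambda>(x, y). f x * g y) summable_on A \<times> B"
    by (rule abs_summable_summable)
  show "((\<lambda>x. f x * b) has_sum a * b) A"
    using assms(1) by (rule has_sum_cmult_left)
  show "((\<lambda>y. case (x, y) of (x, y) \<Rightarrow> f x * g y) has_sum f x * b) B" for x
    using has_sum_cmult_right[OF assms(2)] by simp
qed

lemma has_sum_dirichlet_convolution:
  fixes f g :: "nat \<Rightarrow> complex"
  assumes "(f has_sum a) {1..}" "(g has_sum b) {1..}"
    and "(\<lambda>n. norm (f n)) summable_on {1..}" "(\<lambda>n. norm (g n)) summable_on {1..}"
  shows "((\<lambda>n. \<Sum>d | d dvd n. f d * g (n div d)) has_sum a * b) {1..}"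
proof (rule has_sum_Sigma')
  have "((\<lambda>(d, e). f d * g e) has_sum a * b) ({1..} \<times> {1..})"
    using assms by (rule has_sum_mult_Times)
  then show "((\<lambda>(n, d). f d * g (n div d)) has_sum a * b) (SIGMA n:{1..}. {d. d dvd n})"
    by (rule has_sum_reindex_bij_witness[where j = "\<lambda>(n, d). (d, n div d)" and i = "\<lambda>(d, e). (d * e, d)",
          THEN iffD2, rotated -1])
       (auto simp: Suc_le_eq dvd_div_eq_0_iff intro!: Nat.gr0I)
  show "((\<lambda>d. (\<lambda>(n, d). f d * g (n div d)) (n, d)) has_sum (\<Sum>d | d dvd n. f d * g (n div d))) {d. d dvd n}"
    if "n \<in> {1..}" for n
    using that by (intro has_sum_finiteI) auto
qed

lemma sum_divisors_mult_powr:
  assumes "n > 0"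
  shows "(\<Sum>d | d dvd n. a d / of_nat d powr s * (b (n div d) / of_nat (n div d) powr s))
           = (\<Sum>d | d dvd n. a d * b (n div d)) / (of_nat n :: complex) powr s"
  unfolding sum_divide_distrib
proof (intro sum.cong refl)
  fix d assume "d \<in> {d. d dvd n}"
  then have "(of_nat n :: complex) powr s = of_nat d powr s * of_nat (n div d) powr s"
    by (simp flip: of_nat_mult_powr)
  then show "a d / of_nat d powr s * (b (n div d) / of_nat (n div d) powr s)
      = a d * b (n div d) / of_nat n powr s"
    by simp
qed

lemma norm_summable_on_nat_powr:
  assumes "Re z > 1"
  shows "(\<lambda>n. norm (1 / (of_nat n :: complex) powr z)) summable_on {1..}"
proof -
  have "norm (1 / (of_nat n :: complex) powr z) = real n powr - Re z" for n
    by (simp add: norm_divide norm_of_nat_powr powr_minus_divide)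
  then show ?thesis
    using summable_on_real_powr_neg[of "Re z"] assms by simp
qed

lemma has_sum_zeta_series:
  assumes "Re z > 1"
  shows "((\<lambda>n. 1 / (of_nat n :: complex) powr z) has_sum zeta_series z) {1..}"
proof -
  define S where "S = (\<Sum>\<^sub>\<infinity>n\<in>{1..}. 1 / (of_nat n :: complex) powr z)"
  have "(\<lambda>n. 1 / (of_nat n :: complex) powr z) summable_on {1..}"
    using norm_summable_on_nat_powr[OF assms] by (rule abs_summable_summable)
  then have S: "((\<lambda>n. 1 / (of_nat n :: complex) powr z) has_sum S) {1..}"
    unfolding S_def by (rule has_sum_infsum)
  then have "(\<lambda>n. 1 / of_nat (Suc n) powr z) sums S"
    by (intro has_sum_imp_sums has_sum_Suc_iff[THEN iffD2])
  then show ?thesis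
    using S by (simp add: zeta_series_def sums_iff)
qed

lemma zeta_series_nonzero:
  assumes "Re z \<ge> 2"
  shows "zeta_series z \<noteq> 0"
proof -
  define f where "f n = 1 / (of_nat (Suc n) :: complex) powr z" for n
  define g where "g n = 1 / (1 + real n)\<^sup>2" for n
  have "f sums zeta_series z"
    unfolding f_def using assms
    by (intro has_sum_imp_sums has_sum_Suc_iff[THEN iffD2] has_sum_zeta_series) simp
  moreover have "f 0 = 1"
    by (simp add: f_def)
  ultimately have f_tail: "(\<lambda>n. f (Suc n)) sums (zeta_series z - 1)"
    by (simp add: sums_Suc_iff)
  have "g sums (pi\<^sup>2 / 6)" "g 0 = 1"
    unfolding g_def using inverse_squares_sums by simp_all
  then have g_tail: "(\<lambda>n. g (Suc n)) sums (pi\<^sup>2 / 6 - 1)"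
    by (simp add: sums_Suc_iff)
  have "norm (f (Suc n)) \<le> g (Suc n)" for n
  proof -
    have "norm (f (Suc n)) = real (Suc (Suc n)) powr - Re z"
      unfolding f_def norm_divide norm_of_nat_powr by (simp add: powr_minus_divide)
    also have "\<dots> \<le> real (Suc (Suc n)) powr - 2"
      using assms by (intro powr_mono) auto
    finally show ?thesis
      by (simp add: g_def powr_minus_divide)
  qed
  then have "norm (zeta_series z - 1) \<le> pi\<^sup>2 / 6 - 1"
    using norm_suminf_le[of "\<lambda>n. f (Suc n)" "\<lambda>n. g (Suc n)"] f_tail g_tail by (simp add: sums_iff)
  also have "\<dots> < 1"
  proof -
    have "pi * pi \<le> 3.1416 * 3.1416"
      using pi_approx pi_gt_zero by (intro mult_mono) auto
    then show ?thesis
      by (simp add: power2_eq_square)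
  qed
  finally show ?thesis
    by auto
qed

lemma norm_summable_on_quadratic_div_powr:
  fixes a :: "nat \<Rightarrow> nat"
  assumes "\<And>n. a n \<le> n * n" and "Re s > 3"
  shows "(\<lambda>n. norm (of_nat (a n) / (of_nat n :: complex) powr s)) summable_on {1..}"
proof (rule summable_on_comparison_test[OF summable_on_real_powr_neg[of "Re s - 2"]])
  fix n :: nat assume "n \<in> {1..}"
  have "real (a n) \<le> real n ^ 2"
    using assms(1)[of n] by (simp add: power2_eq_square flip: of_nat_mult)
  then have "real (a n) / real n powr Re s \<le> real n ^ 2 / real n powr Re s"
    by (intro divide_right_mono) auto
  also have "\<dots> = real n powr - (Re s - 2)"
    using \<open>n \<in> {1..}\<close> by (simp add: powr_diff powr_minus_divide)
  finally show "norm (of_nat (a n) / (of_nat n :: complex) powr s) \<le> real n powr - (Re s - 2)"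
    by (simp add: norm_divide norm_of_nat_powr)
qed (use assms in auto)

section \<open>The two factors\<close>

lemma sum_divisors_id_totient_id: "(\<Sum>d | d dvd n. d * totient d * (n div d)) = n * n"
proof -
  have "(\<Sum>d | d dvd n. d * totient d * (n div d)) = (\<Sum>d | d dvd n. n * totient d)"
    by (intro sum.cong refl) auto
  then show ?thesis
    by (simp add: totient_divisor_sum flip: sum_distrib_left)
qed

lemma has_sum_id_totient:
  assumes s: "Re s > 3"
  shows "((\<lambda>m. of_nat (m * totient m) / (of_nat m :: complex) powr s)
           has_sum zeta_series (s - 2) / zeta_series (s - 1)) {1..}"
proof -
  define A where "A m = of_nat (m * totient m) / (of_nat m :: complex) powr s" for m
  define g where "g e = of_nat e / (of_nat e :: complex) powr s" for e
  have norm_A: "(\<lambda>m. norm (A m)) summable_on {1..}"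
    unfolding A_def using s by (intro norm_summable_on_quadratic_div_powr) (simp_all add: totient_le)
  then obtain SA where SA: "(A has_sum SA) {1..}"
    using abs_summable_summable summable_on_def by blast
  have g: "g e = 1 / of_nat e powr (s - 1)" if "e \<in> {1..}" for e
    using of_nat_power_div_powr[of e 1 s] that by (simp add: g_def)
  have "(g has_sum zeta_series (s - 1)) {1..}"
    using has_sum_zeta_series[of "s - 1"] s has_sum_cong[of "{1..}" g] g by simp
  moreover have "(\<lambda>e. norm (g e)) summable_on {1..}"
    using norm_summable_on_nat_powr[of "s - 1"] s summable_on_cong[of "{1..}" "\<lambda>e. norm (g e)"] g by simp
  ultimately have "((\<lambda>n. \<Sum>d | d dvd n. A d * g (n div d)) has_sum SA * zeta_series (s - 1)) {1..}"
    using SA norm_A by (intro has_sum_dirichlet_convolution)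
  moreover have "(\<Sum>d | d dvd n. A d * g (n div d)) = 1 / of_nat n powr (s - 2)" if "n \<in> {1..}" for n
  proof -
    have n: "n > 0" using that by simp
    have "(\<Sum>d | d dvd n. of_nat (d * totient d) * of_nat (n div d)) = (of_nat n :: complex) ^ 2"
      using sum_divisors_id_totient_id[of n] by (simp add: power2_eq_square flip: of_nat_mult of_nat_sum)
    then show ?thesis
      using sum_divisors_mult_powr[OF n, of "\<lambda>d. of_nat (d * totient d)" s "\<lambda>e. of_nat e"]
            of_nat_power_div_powr[OF n, of 2 s]
      by (simp add: A_def g_def)
  qed
  ultimately have "((\<lambda>n. 1 / of_nat n powr (s - 2)) has_sum SA * zeta_series (s - 1)) {1..}"
    using has_sum_cong[of "{1..}" "\<lambda>n. \<Sum>d | d dvd n. A d * g (n div d)"] by simp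
  then have "SA * zeta_series (s - 1) = zeta_series (s - 2)"
    using has_sum_zeta_series[of "s - 2"] s by (simp add: has_sum_unique)
  moreover have "zeta_series (s - 1) \<noteq> 0"
    using s by (intro zeta_series_nonzero) simp
  ultimately have "SA = zeta_series (s - 2) / zeta_series (s - 1)"
    by (simp add: eq_divide_eq)
  then show ?thesis
    using SA unfolding A_def[abs_def] by simp
qed

lemma has_sum_prime_power_geometric:
  assumes p: "p > 1" and z: "Re z > 1"
  shows "((\<lambda>k. of_nat p ^ (k - 1) / (of_nat (p ^ k) :: complex) powr z)
           has_sum 1 / (of_nat p powr z - of_nat p)) {1..}"
proof -
  define P where "P = (of_nat p :: complex)"
  define q where "q = P powr z"
  have P: "P \<noteq> 0" and q: "q \<noteq> 0"
    using p by (simp_all add: P_def q_def)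
  have "norm (P / q) = real p powr (1 - Re z)"
    using p by (simp add: P_def q_def norm_divide norm_of_nat_powr powr_diff)
  also have "\<dots> < 1"
    using p z by (intro powr_less_one) auto
  finally have "((\<lambda>k. 1 / P * (P / q) ^ k) has_sum 1 / P * ((P / q) / (1 - P / q))) {1..}"
    by (intro has_sum_cmult_right has_sum_geometric_from_1)
  moreover have "1 / P * (P / q) ^ k = of_nat p ^ (k - 1) / (of_nat (p ^ k) :: complex) powr z"
    if k: "k \<in> {1..}" for k
  proof -
    obtain j where j: "k = Suc j"
      using k by (cases k) auto
    show ?thesis
      unfolding j of_nat_power_powr P_def[symmetric] q_def[symmetric]
      using P q by (simp add: power_divide)
  qed
  moreover have "1 / P * ((P / q) / (1 - P / q)) = 1 / (q - P)"
    using P q by (simp add: field_simps)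
  ultimately show ?thesis
    unfolding P_def q_def by (subst has_sum_cong[symmetric]) simp_all
qed

lemma inj_on_prime_power: "inj_on (\<lambda>(p, k). p ^ k :: nat) (Collect prime \<times> {1..})"
proof (rule inj_onI)
  fix x y :: "nat \<times> nat" assume "x \<in> Collect prime \<times> {1..}" "y \<in> Collect prime \<times> {1..}"
    and eq: "(\<lambda>(p, k). p ^ k) x = (\<lambda>(p, k). p ^ k) y"
  then obtain p k q j where "x = (p, k)" "y = (q, j)" "prime p" "prime q" "k > 0" "j > 0"
    by (cases x, cases y) auto
  then show "x = y"
    using eq prime_power_inj'[of p q k j] by auto
qed

lemma primepow_image: "(\<lambda>(p, k). p ^ k :: nat) ` (Collect prime \<times> {1..}) = Collect primepow"
  (is "?L = ?R")
proof
  show "?L \<subseteq> ?R"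
    by (auto simp: Suc_le_eq)
  show "?R \<subseteq> ?L"
  proof
    fix n assume "n \<in> ?R"
    then obtain p k where "prime p" "k > 0" "n = p ^ k"
      by (auto simp: primepow_def)
    then show "n \<in> ?L"
      by (intro image_eqI[of _ _ "(p, k)"]) auto
  qed
qed

lemma norm_summable_on_prime_powers:
  assumes z: "Re z > 2"
  shows "(\<lambda>(p, k). norm (of_nat p ^ (k - 1) / (of_nat (p ^ k) :: complex) powr z))
           summable_on (Collect prime \<times> {1..})"
proof (rule summable_on_comparison_test)
  have "(\<lambda>n::nat. real n powr - (Re z - 1)) summable_on Collect primepow"
    using z by (intro summable_on_subset_banach[OF summable_on_real_powr_neg])
               (auto dest: primepow_gt_0_nat simp: Suc_le_eq)
  then show "(\<lambda>(p, k). real (p ^ k) powr - (Re z - 1)) summable_on (Collect prime \<times> {1..})"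
    unfolding primepow_image[symmetric] summable_on_reindex[OF inj_on_prime_power]
    by (simp add: o_def case_prod_unfold)
next
  fix pk :: "nat \<times> nat" assume "pk \<in> Collect prime \<times> {1..}"
  then obtain p k where pk: "pk = (p, k)" "prime p" "k \<ge> 1"
    by auto
  have "p ^ (k - 1) \<le> p ^ k"
    using pk prime_ge_1_nat[of p] by (intro power_increasing) auto
  then have "real p ^ (k - 1) \<le> real (p ^ k)"
    by (metis of_nat_le_iff of_nat_power)
  then have "real p ^ (k - 1) / real (p ^ k) powr Re z \<le> real (p ^ k) / real (p ^ k) powr Re z"
    by (intro divide_right_mono) auto
  also have "\<dots> = real (p ^ k) powr - (Re z - 1)"
    using pk by (simp add: powr_diff powr_minus_divide prime_gt_0_nat)
  finally show "(\<lambda>(p, k). norm (of_nat p ^ (k - 1) / (of_nat (p ^ k) :: complex) powr z)) pk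
      \<le> (\<lambda>(p, k). real (p ^ k) powr - (Re z - 1)) pk"
    unfolding pk by (simp add: norm_divide norm_power norm_of_nat_powr del: of_nat_power)
qed auto

lemma has_sum_F_prime:
  assumes z: "Re z > 2"
  shows "((\<lambda>(p, k). of_nat p ^ (k - 1) / (of_nat (p ^ k) :: complex) powr z)
           has_sum F_prime (z - 1)) (Collect prime \<times> {1..})"
proof -
  define G where "G = (\<lambda>(p, k). of_nat p ^ (k - 1) / (of_nat (p ^ k) :: complex) powr z)"
  define S where "S = infsum G (Collect prime \<times> {1..})"
  have "G summable_on (Collect prime \<times> {1..})"
    using norm_summable_on_prime_powers[OF z] unfolding G_def case_prod_unfold
    by (rule abs_summable_summable)
  then have G: "(G has_sum S) (Collect prime \<times> {1..})"
    unfolding S_def by (rule has_sum_infsum)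
  have "((\<lambda>k. G (p, k)) has_sum 1 / (of_nat p powr z - of_nat p)) {1..}" if "prime p" for p
    unfolding G_def using has_sum_prime_power_geometric[of p z] z prime_gt_1_nat[OF that] by simp
  then have "((\<lambda>p. 1 / (of_nat p powr z - of_nat p)) has_sum S) (Collect prime)"
    by (intro has_sum_Sigma'[OF G]) auto
  then have "F_prime (z - 1) = S"
    by (simp add: F_prime_def infsumI)
  then show ?thesis
    using G by (simp add: G_def)
qed

lemma prime_power_coeff_div_powr:
  assumes p: "prime p" and k: "k > 0"
  shows "of_nat (prime_power_coeff (p ^ k)) / (of_nat (p ^ k) :: complex) powr s
           = of_nat p ^ (k - 1) / of_nat (p ^ k) powr (s - 1) - of_nat p ^ (k - 1) / of_nat (p ^ k) powr s"
proof -
  have pk: "p ^ k > 0"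
    using prime_gt_0_nat[OF p] by simp
  then have "1 \<le> p ^ k"
    by linarith
  then have "(of_nat (prime_power_coeff (p ^ k)) :: complex) = of_nat p ^ (k - 1) * of_nat (p ^ k) - of_nat p ^ (k - 1)"
    by (simp only: prime_power_coeff_prime_power[OF p k] of_nat_mult of_nat_diff of_nat_1)
       (simp add: algebra_simps)
  moreover have "(of_nat (p ^ k) :: complex) powr (s - 1) = of_nat (p ^ k) powr s / of_nat (p ^ k)"
    using pk by (simp add: powr_diff)
  ultimately show ?thesis
    using pk by (simp add: diff_divide_distrib del: of_nat_power)
qed

lemma has_sum_prime_power_coeff:
  assumes s: "Re s > 3"
  shows "((\<lambda>n. of_nat (prime_power_coeff n) / (of_nat n :: complex) powr s)
           has_sum F_prime (s - 2) - F_prime (s - 1)) {1..}"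
proof -
  define h where "h n = of_nat (prime_power_coeff n) / (of_nat n :: complex) powr s" for n
  define G where "G z = (\<lambda>(p, k). of_nat p ^ (k - 1) / (of_nat (p ^ k) :: complex) powr z)" for z
  have "(G (s - 1) has_sum F_prime (s - 2)) (Collect prime \<times> {1..})"
    using has_sum_F_prime[of "s - 1"] s unfolding G_def by (simp add: algebra_simps)
  moreover have "(G s has_sum F_prime (s - 1)) (Collect prime \<times> {1..})"
    using has_sum_F_prime[of s] s unfolding G_def by simp
  ultimately have diff_has_sum: "((\<lambda>pk. G (s - 1) pk + - G s pk) has_sum F_prime (s - 2) + - F_prime (s - 1)) (Collect prime \<times> {1..})"
    by (intro has_sum_add has_sum_uminus[THEN iffD2]) simp_all
  have "G (s - 1) pk + - G s pk = (h \<circ> (\<lambda>(p, k). p ^ k)) pk" if "pk \<in> Collect prime \<times> {1..}" for pk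
    using that by (auto simp: G_def h_def prime_power_coeff_div_powr Suc_le_eq simp del: of_nat_power)
  then have "((h \<circ> (\<lambda>(p, k). p ^ k)) has_sum F_prime (s - 2) - F_prime (s - 1)) (Collect prime \<times> {1..})"
    using diff_has_sum by (subst has_sum_cong[symmetric]) simp_all
  then have "(h has_sum F_prime (s - 2) - F_prime (s - 1)) (Collect primepow)"
    unfolding has_sum_reindex[OF inj_on_prime_power, symmetric] primepow_image .
  moreover have "h n = 0" if "n \<notin> Collect primepow" for n
    using that by (simp add: h_def prime_power_coeff_def)
  ultimately show ?thesis
    unfolding h_def[symmetric] by (subst has_sum_cong_neutral) (auto dest: primepow_gt_0_nat simp: Suc_le_eq)
qed

theorem mainTheorem20:
  fixes s :: complex
  assumes "Re s > 3"
  shows "(\<lambda>n. of_nat (totient (Suc n) * arith_deriv (Suc n)) / (of_nat (Suc n)) powr s)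
           sums (zeta_series (s - 2) / zeta_series (s - 1) * (F_prime (s - 2) - F_prime (s - 1)))"
proof -
  define C where "C n = of_nat (prime_power_coeff n) / (of_nat n :: complex) powr s" for n
  define A where "A m = of_nat (m * totient m) / (of_nat m :: complex) powr s" for m
  have "((\<lambda>n. \<Sum>d | d dvd n. C d * A (n div d))
          has_sum (F_prime (s - 2) - F_prime (s - 1)) * (zeta_series (s - 2) / zeta_series (s - 1))) {1..}"
    unfolding C_def A_def using assms
    by (intro has_sum_dirichlet_convolution has_sum_prime_power_coeff has_sum_id_totient
              norm_summable_on_quadratic_div_powr prime_power_coeff_le) (simp_all add: totient_le)
  moreover have "(\<Sum>d | d dvd n. C d * A (n div d)) = of_nat (totient n * arith_deriv n) / of_nat n powr s"
    if "n \<in> {1..}" for n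
    using that sum_divisors_mult_powr[of n "\<lambda>d. of_nat (prime_power_coeff d)" s "\<lambda>m. of_nat (m * totient m)"]
    by (simp add: C_def A_def convolution_prime_power_coeff_id_totient flip: of_nat_mult of_nat_sum)
  ultimately have "((\<lambda>n. of_nat (totient n * arith_deriv n) / (of_nat n :: complex) powr s)
      has_sum (F_prime (s - 2) - F_prime (s - 1)) * (zeta_series (s - 2) / zeta_series (s - 1))) {1..}"
    by (subst has_sum_cong[symmetric]) simp_all
  then show ?thesis
    by (subst mult.commute) (intro has_sum_imp_sums has_sum_Suc_iff[THEN iffD2])
qed

end
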